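(* Let $d=pq$ with integers $p,q\ge2$, and let $\mathcal{C}$ be any maximally commutative set in $\mathbb{Z}_d\times\mathbb{Z}_d$ containing $(p,0)$ and $(0,q)$ (such sets exist). Then every $(s,t)\in\mathbb{Z}_d\times\mathbb{Z}_d$ with $s$ or $t$ invertible in $\mathbb{Z}_d$ lies outside $\mathcal{C}$. Consequently, if $\mathcal{S}\subseteq\mathbb{Z}_d\times\mathbb{Z}_d$ is a set of generalized Bell states such that every $(m,n)\in\Delta\mathcal{S}$ has $m$ or $n$ invertible in $\mathbb{Z}_d$, then $\Delta\mathcal{S}\cap\mathcal{C}=\emptyset$ and $\mathcal{S}$ is one-way LOCC distinguishable.
   Context: $\mathbb{Z}_d$ is the integers mod $d$. Generalized Bell states in $\mathbb{C}^d\otimes\mathbb{C}^d$ are $|\Psi_{m,n}\rangle=(I\otimes X^mZ^n)\frac1{\sqrt d}\sum_i|ii\rangle$ with $X=\sum_i|i+1\bmod d\rangle\langle i|$, $Z=\sum_i e^{2\pi\sqrt{-1}i/d}|i\rangle\langle i|$, and a set of them is identified with $\mathcal{S}=\{(m_i,n_i)\}_{i=1}^l$. $\Delta\mathcal{S}=\{(m_j-m_i,n_j-n_i)\bmod d:1\le i<j\le l\}$. Pairs $(m,n),(m',n')$ commute if $mn'-nm'\equiv0\pmod d$; a maximally commutative set is a subset whose elements pairwise commute and such that no element outside it commutes with all its elements. *)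

theory Defs
  imports Complex_Main
begin

definition Zd2 :: "int \<Rightarrow> (int \<times> int) set" where
  "Zd2 d = {0..<d} \<times> {0..<d}"

definition commutes :: "int \<Rightarrow> int \<times> int \<Rightarrow> int \<times> int \<Rightarrow> bool" where
  "commutes d x y \<longleftrightarrow> (fst x * snd y - snd x * fst y) mod d = 0"

definition max_commutative :: "int \<Rightarrow> (int \<times> int) set \<Rightarrow> bool" where
  "max_commutative d C \<longleftrightarrow> C \<subseteq> Zd2 d
     \<and> (\<forall>x\<in>C. \<forall>y\<in>C. commutes d x y)
     \<and> (\<forall>z\<in>Zd2 d - C. \<exists>x\<in>C. \<not> commutes d z x)"

definition unit_mod :: "int \<Rightarrow> int \<Rightarrow> bool" where
  "unit_mod d s \<longleftrightarrow> coprime s d"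

definition diff_set :: "int \<Rightarrow> (int \<times> int) list \<Rightarrow> (int \<times> int) set" where
  "diff_set d S = {((fst (S!j) - fst (S!i)) mod d, (snd (S!j) - snd (S!i)) mod d)
                    | i j. i < j \<and> j < length S}"

text \<open>Generalized Bell state |Psi_{m,n}> = (I \<otimes> X^m Z^n) (1/sqrt d) sum_i |ii>,
  as amplitude function of the basis vector |a>|b> (a: Alice, b: Bob).
  Since X^m Z^n |a> = omega^(n a) |a+m mod d>.\<close>
definition bell :: "nat \<Rightarrow> int \<times> int \<Rightarrow> nat \<Rightarrow> nat \<Rightarrow> complex" where
  "bell d mn a b = (1 / complex_of_real (sqrt (real d)))
      * cis (2 * pi * real_of_int (snd mn) * real a / real d)
      * (if int b = (int a + fst mn) mod int d then 1 else 0)"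

definition psd :: "nat \<Rightarrow> (nat \<Rightarrow> nat \<Rightarrow> complex) \<Rightarrow> bool" where
  "psd d A \<longleftrightarrow> (\<forall>v :: nat \<Rightarrow> complex.
      let z = (\<Sum>a<d. \<Sum>c<d. cnj (v a) * A a c * v c) in Im z = 0 \<and> Re z \<ge> 0)"

text \<open>Bob's unnormalized conditional state Tr_A[(A \<otimes> I)|psi><psi|].\<close>
definition bob_state :: "nat \<Rightarrow> (nat \<Rightarrow> nat \<Rightarrow> complex) \<Rightarrow> (nat \<Rightarrow> nat \<Rightarrow> complex)
                         \<Rightarrow> nat \<Rightarrow> nat \<Rightarrow> complex" where
  "bob_state d A psi b b' = (\<Sum>a<d. \<Sum>c<d. A a c * psi c b * cnj (psi a b'))"

text \<open>One-way LOCC (Alice measures first with a POVM, then Bob) perfect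
  distinguishability: after every outcome k, Bob's conditional states of distinct
  members of S are mutually orthogonal (Tr(rho_i rho_j) = 0 for psd operators).\<close>
definition one_way_LOCC_distinguishable :: "nat \<Rightarrow> (int \<times> int) list \<Rightarrow> bool" where
  "one_way_LOCC_distinguishable d S \<longleftrightarrow>
     (\<exists>(K :: nat set) (M :: nat \<Rightarrow> nat \<Rightarrow> nat \<Rightarrow> complex).
        finite K \<and> (\<forall>k\<in>K. psd d (M k))
        \<and> (\<forall>a<d. \<forall>c<d. (\<Sum>k\<in>K. M k a c) = (if a = c then 1 else 0))
        \<and> (\<forall>k\<in>K. \<forall>i<length S. \<forall>j<length S. i \<noteq> j \<longrightarrow>
             (\<Sum>b<d. \<Sum>b'<d. bob_state d (M k) (bell d (S!i)) b b'
                              * bob_state d (M k) (bell d (S!j)) b' b) = 0))"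

end

theory Submission
  imports Defs
begin

text \<open>Commuting with (p,0) and (0,q) forces p | s and q | t, so every pair (s,t) of
  a maximally commutative set containing them has both coordinates sharing a proper factor with d;
  hence neither coordinate is a unit. For one-way LOCC, Alice measures in the orthonormal basis
  u_(r+pj) = q^(-1/2) \<Sum>_(c = r mod p) \<omega>^(jc) |c>, \<omega> = exp(2\<pi>i/d). Bob's conditional states are then
  pure, and the overlap of those of \<Psi>_(m,n) and \<Psi>_(m',n') vanishes unless p | m - m' (otherwise
  their supports are disjoint) and q | n - n' (otherwise it is a full geometric sum of q-th roots
  of unity). A difference with a unit coordinate cannot satisfy both divisibilities.\<close>

definition unit_root :: "nat \<Rightarrow> int \<Rightarrow> complex" where
  "unit_root N x = cis (2 * pi * real_of_int x / real N)"

lemma unit_root_add: "unit_root N (x + y) = unit_root N x * unit_root N y"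
  by (simp add: unit_root_def cis_mult add_divide_distrib distrib_left)

lemma unit_root_cnj: "cnj (unit_root N x) = unit_root N (- x)"
  by (simp add: unit_root_def cis_cnj)

lemma unit_root_power: "unit_root N x ^ l = unit_root N (x * int l)"
  by (simp add: unit_root_def DeMoivre mult_ac)

lemma unit_root_scale: "p > 0 \<Longrightarrow> unit_root (p * q) (int p * x) = unit_root q x"
  by (simp add: unit_root_def mult.assoc)

lemma unit_root_eq_1_iff:
  assumes "N > 0"
  shows "unit_root N x = 1 \<longleftrightarrow> int N dvd x"
proof
  assume "unit_root N x = 1"
  then have "cos (2 * pi * real_of_int x / real N) = 1"
    unfolding unit_root_def by (metis cis.sel(1) one_complex.sel(1))
  then obtain n :: int where "2 * pi * real_of_int x / real N = n * 2 * pi"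
    by (auto simp: cos_one_2pi_int)
  then have "real_of_int x = real_of_int (n * int N)"
    using assms by (simp add: field_simps)
  then have "x = n * int N" by linarith
  then show "int N dvd x" by simp
next
  assume "int N dvd x"
  then obtain k where "x = int N * k" by (auto elim: dvdE)
  then have "2 * pi * real_of_int x / real N = 2 * pi * real_of_int k" using assms by simp
  then show "unit_root N x = 1" by (simp add: unit_root_def)
qed

lemma unit_root_cong:
  assumes "N > 0" "x mod int N = y mod int N"
  shows "unit_root N x = unit_root N y"
proof -
  have "unit_root N (x - y) = 1"
    using assms by (simp add: unit_root_eq_1_iff mod_eq_dvd_iff)
  then show ?thesis using unit_root_add[of N "x - y" y] by simp
qed

lemma sum_unit_root_powers:
  assumes "q > 0"
  shows "(\<Sum>l<q. unit_root q (t * int l)) = (if int q dvd t then of_nat q else 0)"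
proof (cases "int q dvd t")
  case True
  then have "unit_root q (t * int l) = 1" for l
    using assms by (simp add: unit_root_eq_1_iff)
  then show ?thesis using True by simp
next
  case False
  then have "unit_root q t \<noteq> 1" "unit_root q t ^ q = 1"
    using assms by (simp_all add: unit_root_power unit_root_eq_1_iff)
  then show ?thesis using False by (simp add: unit_root_power[symmetric] sum_gp_strict)
qed

lemma psd_rank1: "psd d (\<lambda>a c. u a * cnj (u c))"
  unfolding psd_def Let_def
proof (intro allI)
  fix v :: "nat \<Rightarrow> complex"
  define z where "z = (\<Sum>a<d. cnj (v a) * u a)"
  have "(\<Sum>a<d. \<Sum>c<d. cnj (v a) * (u a * cnj (u c)) * v c)
      = (\<Sum>a<d. cnj (v a) * u a) * (\<Sum>c<d. cnj (u c) * v c)"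
    by (simp add: sum_product mult_ac)
  also have "\<dots> = z * cnj z" by (simp add: z_def mult.commute)
  also have "\<dots> = complex_of_real ((Re z)\<^sup>2 + (Im z)\<^sup>2)" by (rule complex_mult_cnj)
  finally show "Im (\<Sum>a<d. \<Sum>c<d. cnj (v a) * (u a * cnj (u c)) * v c) = 0 \<and>
      0 \<le> Re (\<Sum>a<d. \<Sum>c<d. cnj (v a) * (u a * cnj (u c)) * v c)" by simp
qed

lemma bob_state_rank1:
  "bob_state d (\<lambda>a c. u a * cnj (u c)) psi b b'
     = (\<Sum>c<d. cnj (u c) * psi c b) * cnj (\<Sum>a<d. cnj (u a) * psi a b')"
proof -
  have "(\<Sum>c<d. cnj (u c) * psi c b) * cnj (\<Sum>a<d. cnj (u a) * psi a b')
     = (\<Sum>a<d. u a * cnj (psi a b')) * (\<Sum>c<d. cnj (u c) * psi c b)"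
    by (simp add: mult.commute)
  also have "\<dots> = (\<Sum>a<d. \<Sum>c<d. u a * cnj (u c) * psi c b * cnj (psi a b'))"
    by (simp add: sum_product mult_ac)
  finally show ?thesis by (simp add: bob_state_def)
qed

lemma trace_product_rank1:
  "(\<Sum>b<d. \<Sum>b'<d. (v b * cnj (v b')) * (w b' * cnj (w b)))
     = (\<Sum>b<d. v b * cnj (w b)) * cnj (\<Sum>b<d. v b * cnj (w b))"
  by (simp add: sum_product mult_ac)

lemma residue_class_lessThan_mult:
  fixes p q r :: nat
  assumes "r < p"
  shows "{b \<in> {..<p * q}. b mod p = r} = (\<lambda>l. r + p * l) ` {..<q}"
proof (intro equalityI subsetI)
  fix b assume "b \<in> {b \<in> {..<p * q}. b mod p = r}"
  then have b: "b < p * q" "b mod p = r" by auto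
  have "b = r + p * (b div p)" using mod_mult_div_eq[of b p] b(2) by simp
  moreover have "b div p < q" using b(1) by (simp add: less_mult_imp_div_less mult.commute)
  ultimately show "b \<in> (\<lambda>l. r + p * l) ` {..<q}" by blast
next
  fix b assume "b \<in> (\<lambda>l. r + p * l) ` {..<q}"
  then obtain l where l: "l < q" "b = r + p * l" by auto
  have "r + p * l < p * (l + 1)" using assms by simp
  also have "\<dots> \<le> p * q" using l by (intro mult_le_mono2) simp
  finally show "b \<in> {b \<in> {..<p * q}. b mod p = r}" using l assms by simp
qed

lemma sum_residue_class:
  fixes p q r :: nat and f :: "nat \<Rightarrow> 'a::comm_monoid_add"
  assumes "r < p"
  shows "(\<Sum>b<p * q. if b mod p = r then f b else 0) = (\<Sum>l<q. f (r + p * l))"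
proof -
  have "(\<Sum>b<p * q. if b mod p = r then f b else 0) = sum f {b \<in> {..<p * q}. b mod p = r}"
    by (simp add: sum.inter_filter[symmetric])
  also have "\<dots> = sum f ((\<lambda>l. r + p * l) ` {..<q})"
    using residue_class_lessThan_mult[OF assms] by simp
  also have "\<dots> = (\<Sum>l<q. f (r + p * l))"
    using assms by (subst sum.reindex) (auto simp: inj_on_def)
  finally show ?thesis .
qed

definition alice_vec :: "nat \<Rightarrow> nat \<Rightarrow> nat \<Rightarrow> nat \<Rightarrow> complex" where
  "alice_vec p q k c = (if c mod p = k mod p
      then complex_of_real (1 / sqrt (real q)) * unit_root (p * q) (int (k div p) * int c) else 0)"

lemma alice_vec_outer:
  assumes "r < p"
  shows "alice_vec p q (r + p * j) a * cnj (alice_vec p q (r + p * j) c)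
     = (if a mod p = r \<and> c mod p = r
        then complex_of_real (1 / real q) * unit_root (p * q) (int j * (int a - int c)) else 0)"
proof -
  have "(r + p * j) mod p = r" "(r + p * j) div p = j" using assms by auto
  moreover have "complex_of_real (1 / sqrt (real q)) * cnj (complex_of_real (1 / sqrt (real q)))
      = complex_of_real (1 / real q)"
    by (simp flip: of_real_mult)
  moreover have "unit_root (p * q) (int j * int a) * cnj (unit_root (p * q) (int j * int c))
      = unit_root (p * q) (int j * (int a - int c))"
    by (simp add: unit_root_cnj unit_root_add[symmetric] algebra_simps)
  ultimately show ?thesis by (auto simp: alice_vec_def mult_ac)
qed

lemma inj_on_mixed_radix:
  fixes p :: nat and A :: "nat set"
  shows "inj_on (\<lambda>(r, j). r + p * j) ({..<p} \<times> A)"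
proof (rule inj_onI, clarsimp)
  fix r j r' j' assume h: "r < p" "r' < p" "r + p * j = r' + p * j'"
  have "r = (r + p * j) mod p" using h(1) by simp
  also have "\<dots> = r'" using h by simp
  finally show "r = r' \<and> j = j'" using h(1,3) by simp
qed

lemma alice_vec_complete:
  fixes p q a c :: nat
  assumes "p > 0" "q > 0" "a < p * q" "c < p * q"
  shows "(\<Sum>k \<in> (\<lambda>(r, j). r + p * j) ` ({..<p} \<times> {..<q}). alice_vec p q k a * cnj (alice_vec p q k c))
     = (if a = c then 1 else 0)"
proof -
  define X where "X = (\<Sum>j<q. complex_of_real (1 / real q) * unit_root (p * q) (int j * (int a - int c)))"
  have "(\<Sum>k \<in> (\<lambda>(r, j). r + p * j) ` ({..<p} \<times> {..<q}). alice_vec p q k a * cnj (alice_vec p q k c))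
      = (\<Sum>r<p. \<Sum>j<q. alice_vec p q (r + p * j) a * cnj (alice_vec p q (r + p * j) c))"
    by (subst sum.reindex[OF inj_on_mixed_radix]) (simp add: sum.cartesian_product case_prod_beta)
  also have "\<dots> = (\<Sum>r<p. if r = a mod p then (if c mod p = a mod p then X else 0) else 0)"
    by (rule sum.cong) (auto simp: alice_vec_outer X_def)
  also have "\<dots> = (if c mod p = a mod p then X else 0)"
    using assms(1) by simp
  also have "\<dots> = (if a = c then 1 else 0)"
  proof (cases "c mod p = a mod p")
    case True
    then obtain l where l: "int a - int c = int p * l"
      by (metis mod_eq_dvd_iff of_nat_mod dvdE)
    have "X = complex_of_real (1 / real q) * (\<Sum>j<q. unit_root q (l * int j))"
    proof -
      have eq: "int j * (int a - int c) = int p * (l * int j)" for j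
        using l by (simp add: algebra_simps)
      show ?thesis
        unfolding X_def sum_distrib_left by (simp only: eq unit_root_scale[OF assms(1)])
    qed
    also have "\<dots> = (if int q dvd l then 1 else 0)"
      using assms(2) by (simp add: sum_unit_root_powers)
    also have "int q dvd l \<longleftrightarrow> a = c"
    proof
      assume "int q dvd l"
      then have "int (p * q) dvd int a - int c" using l by simp
      then have "int a - int c = 0 \<or> \<bar>int (p * q)\<bar> \<le> \<bar>int a - int c\<bar>"
        using dvd_imp_le_int by blast
      then show "a = c" using assms(3,4) by linarith
    next
      assume "a = c"
      then show "int q dvd l" using l assms(1) by simp
    qed
    finally show ?thesis using True by simp
  qed auto
  finally show ?thesis .
qed

definition bob_amp :: "nat \<Rightarrow> nat \<Rightarrow> nat \<Rightarrow> int \<times> int \<Rightarrow> nat \<Rightarrow> complex" where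
  "bob_amp p q k mn b = (if (int b - fst mn) mod int p = int (k mod p)
      then unit_root (p * q) ((snd mn - int (k div p)) * (int b - fst mn)) else 0)"

lemma bell_eq_if:
  assumes "b < d"
  shows "bell d mn c b = (if int c mod int d = (int b - fst mn) mod int d
      then complex_of_real (1 / sqrt (real d)) * unit_root d (snd mn * int c) else 0)"
proof -
  have "int b = int b mod int d" using assms by simp
  then have "int b = (int c + fst mn) mod int d \<longleftrightarrow> (int c + fst mn) mod int d = int b mod int d"
    by auto
  also have "\<dots> \<longleftrightarrow> int c mod int d = (int b - fst mn) mod int d"
    by (simp add: mod_eq_dvd_iff algebra_simps)
  finally show ?thesis by (simp add: bell_def unit_root_def mult.assoc)
qed

lemma alice_vec_bell_overlap:
  assumes "p > 0" "q > 0" "b < p * q"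
  shows "(\<Sum>c<p * q. cnj (alice_vec p q k c) * bell (p * q) mn c b)
    = complex_of_real (1 / sqrt (real (p * q)) * (1 / sqrt (real q))) * bob_amp p q k mn b"
proof -
  define d where "d = p * q"
  have d0: "d > 0" using assms by (simp add: d_def)
  \<comment> \<open>the only Alice index c with X^m |c> = |b>\<close>
  define c0 where "c0 = nat ((int b - fst mn) mod int d)"
  have c0i: "int c0 = (int b - fst mn) mod int d" using d0 by (simp add: c0_def)
  have c0d: "c0 < d" using c0i d0 by (metis of_nat_less_iff pos_mod_bound of_nat_0_less_iff)
  have bd: "b < d" using assms(3) by (simp add: d_def)
  have hit: "int c = (int b - fst mn) mod int d \<longleftrightarrow> c = c0" for c
    by (simp flip: c0i)
  have "(\<Sum>c<d. cnj (alice_vec p q k c) * bell d mn c b)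
      = (\<Sum>c<d. if c = c0 then cnj (alice_vec p q k c0)
           * (complex_of_real (1 / sqrt (real d)) * unit_root d (snd mn * int c0)) else 0)"
    by (intro sum.cong) (auto simp: bell_eq_if[OF bd] hit)
  also have "\<dots> = cnj (alice_vec p q k c0)
      * (complex_of_real (1 / sqrt (real d)) * unit_root d (snd mn * int c0))"
    using c0d by simp
  finally have sum_eq: "(\<Sum>c<d. cnj (alice_vec p q k c) * bell d mn c b) = \<dots>" .
  have "int (c0 mod p) = (int b - fst mn) mod int p"
    using c0i by (simp add: d_def of_nat_mod mod_mod_cancel)
  then have "c0 mod p = k mod p \<longleftrightarrow> (int b - fst mn) mod int p = int (k mod p)"
    by (metis of_nat_eq_iff)
  moreover have "unit_root d (snd mn * int c0) * unit_root d (- (int (k div p) * int c0))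
      = unit_root d ((snd mn - int (k div p)) * (int b - fst mn))"
  proof -
    have "unit_root d (snd mn * int c0) * unit_root d (- (int (k div p) * int c0))
        = unit_root d ((snd mn - int (k div p)) * int c0)"
      by (simp add: unit_root_add[symmetric] algebra_simps)
    also have "\<dots> = unit_root d ((snd mn - int (k div p)) * (int b - fst mn))"
      using d0 c0i by (intro unit_root_cong) (auto simp: mod_mult_right_eq)
    finally show ?thesis .
  qed
  ultimately show ?thesis
    using sum_eq by (auto simp: alice_vec_def bob_amp_def unit_root_cnj d_def mult_ac)
qed

lemma bob_amp_disjoint_support:
  assumes "\<not> int p dvd fst x - fst y"
  shows "bob_amp p q k x b * cnj (bob_amp p q k y b) = 0"
proof -
  have "\<not> ((int b - fst x) mod int p = int (k mod p) \<and> (int b - fst y) mod int p = int (k mod p))"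
  proof
    assume "(int b - fst x) mod int p = int (k mod p) \<and> (int b - fst y) mod int p = int (k mod p)"
    then have "(int b - fst y) mod int p = (int b - fst x) mod int p" by simp
    then have "int p dvd (int b - fst y) - (int b - fst x)" by (simp only: mod_eq_dvd_iff)
    then show False using assms by simp
  qed
  then show ?thesis by (auto simp: bob_amp_def)
qed

lemma bob_amp_same_support:
  assumes "p > 0" "int p dvd fst x - fst y"
  obtains r0 e where "r0 < p"
    "\<And>b. bob_amp p q k x b * cnj (bob_amp p q k y b)
       = (if b mod p = r0 then e * unit_root (p * q) ((snd x - snd y) * int b) else 0)"
proof -
  define r where "r = k mod p"
  have "r < p" using assms(1) by (simp add: r_def)
  define r0 where "r0 = nat ((int r + fst x) mod int p)"
  have r0i: "int r0 = (int r + fst x) mod int p" using assms(1) by (simp add: r0_def)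
  have "r0 < p" using r0i assms(1) by (metis of_nat_less_iff pos_mod_bound of_nat_0_less_iff)
  have supp_x: "(int b - fst x) mod int p = int r \<longleftrightarrow> b mod p = r0" for b
  proof -
    have "(int b - fst x) mod int p = int r \<longleftrightarrow> (int b - fst x) mod int p = int r mod int p"
      using \<open>r < p\<close> by simp
    also have "\<dots> \<longleftrightarrow> int p dvd int b - (int r + fst x)"
      by (simp add: mod_eq_dvd_iff algebra_simps)
    also have "\<dots> \<longleftrightarrow> int b mod int p = (int r + fst x) mod int p"
      by (simp add: mod_eq_dvd_iff)
    also have "\<dots> \<longleftrightarrow> int (b mod p) = int r0" using r0i by (simp add: of_nat_mod)
    finally show ?thesis by simp
  qed
  have supp_y: "(int b - fst y) mod int p = (int b - fst x) mod int p" for b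
    using assms(2) by (simp add: mod_eq_dvd_iff)
  define e where "e = unit_root (p * q) (- (snd x - int (k div p)) * fst x + (snd y - int (k div p)) * fst y)"
  have phase: "unit_root (p * q) ((snd x - int (k div p)) * (int b - fst x))
      * cnj (unit_root (p * q) ((snd y - int (k div p)) * (int b - fst y)))
      = e * unit_root (p * q) ((snd x - snd y) * int b)" for b
    by (simp add: e_def unit_root_cnj unit_root_add[symmetric] algebra_simps)
  have "bob_amp p q k x b * cnj (bob_amp p q k y b)
      = (if b mod p = r0 then e * unit_root (p * q) ((snd x - snd y) * int b) else 0)" for b
    unfolding bob_amp_def r_def[symmetric] supp_y supp_x using phase by simp
  then show ?thesis by (rule that[OF \<open>r0 < p\<close>])
qed

lemma bob_amp_orthogonal:
  assumes "p > 0" "q > 0" "\<not> (int p dvd fst x - fst y \<and> int q dvd snd x - snd y)"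
  shows "(\<Sum>b<p * q. bob_amp p q k x b * cnj (bob_amp p q k y b)) = 0"
proof (cases "int p dvd fst x - fst y")
  case False
  then show ?thesis by (simp add: bob_amp_disjoint_support)
next
  case True
  with assms(3) have not_dvd: "\<not> int q dvd snd x - snd y" by simp
  obtain r0 e where r0: "r0 < p" and prod: "\<And>b. bob_amp p q k x b * cnj (bob_amp p q k y b)
       = (if b mod p = r0 then e * unit_root (p * q) ((snd x - snd y) * int b) else 0)"
    using bob_amp_same_support[OF assms(1) True] by blast
  define t where "t = snd x - snd y"
  have "(\<Sum>b<p * q. bob_amp p q k x b * cnj (bob_amp p q k y b))
      = (\<Sum>l<q. e * unit_root (p * q) (t * int (r0 + p * l)))"
    by (simp only: prod sum_residue_class[OF r0] t_def)
  also have "\<dots> = (\<Sum>l<q. e * unit_root (p * q) (t * int r0) * unit_root q (t * int l))"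
  proof (rule sum.cong[OF refl])
    fix l
    have "t * int (r0 + p * l) = t * int r0 + int p * (t * int l)" by (simp add: algebra_simps)
    then show "e * unit_root (p * q) (t * int (r0 + p * l))
        = e * unit_root (p * q) (t * int r0) * unit_root q (t * int l)"
      using assms(1) by (simp add: unit_root_add unit_root_scale)
  qed
  also have "\<dots> = e * unit_root (p * q) (t * int r0) * (\<Sum>l<q. unit_root q (t * int l))"
    by (simp add: sum_distrib_left)
  also have "\<dots> = 0" using assms(2) not_dvd by (simp add: sum_unit_root_powers t_def)
  finally show ?thesis .
qed

lemma one_way_LOCC_distinguishable_if_no_collision:
  fixes p q :: nat and S :: "(int \<times> int) list"
  assumes "p > 0" "q > 0"
    and no_collision: "\<And>i j. i < length S \<Longrightarrow> j < length S \<Longrightarrow> i \<noteq> j \<Longrightarrow>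
       \<not> (int p dvd fst (S!i) - fst (S!j) \<and> int q dvd snd (S!i) - snd (S!j))"
  shows "one_way_LOCC_distinguishable (p * q) S"
proof -
  define K where "K = (\<lambda>(r, j). r + p * j) ` ({..<p} \<times> {..<q})"
  define M where "M = (\<lambda>k a c. alice_vec p q k a * cnj (alice_vec p q k c))"
  have orth: "(\<Sum>b<p * q. \<Sum>b'<p * q. bob_state (p * q) (M k) (bell (p * q) (S!i)) b b'
                              * bob_state (p * q) (M k) (bell (p * q) (S!j)) b' b) = 0"
    if "i < length S" "j < length S" "i \<noteq> j" for k i j
  proof -
    define v where "v b = (\<Sum>c<p * q. cnj (alice_vec p q k c) * bell (p * q) (S!i) c b)" for b
    define w where "w b = (\<Sum>c<p * q. cnj (alice_vec p q k c) * bell (p * q) (S!j) c b)" for b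
    define \<alpha> where "\<alpha> = complex_of_real (1 / sqrt (real (p * q)) * (1 / sqrt (real q)))"
    have "(\<Sum>b<p * q. v b * cnj (w b))
        = (\<Sum>b<p * q. (\<alpha> * bob_amp p q k (S!i) b) * cnj (\<alpha> * bob_amp p q k (S!j) b))"
      by (rule sum.cong) (simp_all add: v_def w_def \<alpha>_def alice_vec_bell_overlap assms)
    also have "\<dots> = \<alpha> * cnj \<alpha> * (\<Sum>b<p * q. bob_amp p q k (S!i) b * cnj (bob_amp p q k (S!j) b))"
      by (simp add: sum_distrib_left mult_ac)
    also have "\<dots> = 0"
      using bob_amp_orthogonal[OF assms(1,2) no_collision[OF that]] by simp
    finally have "(\<Sum>b<p * q. v b * cnj (w b)) = 0" .
    then show ?thesis
      by (simp add: M_def bob_state_rank1 trace_product_rank1 flip: v_def w_def)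
  qed
  show ?thesis
    unfolding one_way_LOCC_distinguishable_def
  proof (intro exI conjI)
    show "finite K" by (simp add: K_def)
    show "\<forall>k\<in>K. psd (p * q) (M k)" by (simp add: M_def psd_rank1)
    show "\<forall>a<p * q. \<forall>c<p * q. (\<Sum>k\<in>K. M k a c) = (if a = c then 1 else 0)"
      using alice_vec_complete[OF assms(1,2)] by (simp add: K_def M_def)
  qed (use orth in blast)
qed

lemma commutes_left_generator_iff:
  fixes a b :: int
  assumes "a \<noteq> 0"
  shows "commutes (a * b) z (a, 0) \<longleftrightarrow> b dvd snd z"
proof -
  have "commutes (a * b) z (a, 0) \<longleftrightarrow> b * a dvd snd z * a"
    by (simp add: commutes_def dvd_eq_mod_eq_0[symmetric] mult.commute)
  then show ?thesis using assms by simp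
qed

lemma commutes_right_generator_iff:
  fixes a b :: int
  assumes "b \<noteq> 0"
  shows "commutes (a * b) z (0, b) \<longleftrightarrow> a dvd fst z"
proof -
  have "commutes (a * b) z (0, b) \<longleftrightarrow> a * b dvd fst z * b"
    by (simp add: commutes_def dvd_eq_mod_eq_0[symmetric])
  then show ?thesis using assms by simp
qed

definition pq_set :: "nat \<Rightarrow> nat \<Rightarrow> (int \<times> int) set" where
  "pq_set p q = {z \<in> Zd2 (int (p * q)). int p dvd fst z \<and> int q dvd snd z}"

lemma generators_in_pq_set:
  assumes "p \<ge> 2" "q \<ge> 2"
  shows "(int p, 0) \<in> pq_set p q" "(0, int q) \<in> pq_set p q"
proof -
  have "p * 1 < p * q" "1 * q < p * q" using assms by (intro mult_strict_left_mono mult_strict_right_mono; simp)+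
  then show "(int p, 0) \<in> pq_set p q" "(0, int q) \<in> pq_set p q"
    using assms by (auto simp: pq_set_def Zd2_def)
qed

lemma max_commutative_pq_set:
  assumes "p \<ge> 2" "q \<ge> 2"
  shows "max_commutative (int (p * q)) (pq_set p q)"
  unfolding max_commutative_def
proof (intro conjI ballI)
  show "pq_set p q \<subseteq> Zd2 (int (p * q))" by (auto simp: pq_set_def)
next
  fix x y assume "x \<in> pq_set p q" "y \<in> pq_set p q"
  then obtain a b a' b' where "fst x = int p * a" "snd x = int q * b" "fst y = int p * a'" "snd y = int q * b'"
    by (auto simp: pq_set_def elim!: dvdE)
  then have "fst x * snd y - snd x * fst y = int (p * q) * (a * b' - b * a')"
    by (simp add: algebra_simps)
  then show "commutes (int (p * q)) x y" by (simp add: commutes_def)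
next
  fix z assume "z \<in> Zd2 (int (p * q)) - pq_set p q"
  then have "\<not> commutes (int (p * q)) z (0, int q) \<or> \<not> commutes (int (p * q)) z (int p, 0)"
    using assms by (auto simp: pq_set_def commutes_left_generator_iff commutes_right_generator_iff)
  then show "\<exists>x\<in>pq_set p q. \<not> commutes (int (p * q)) z x"
    using generators_in_pq_set[OF assms] by blast
qed

lemma max_commutative_subset_pq_set:
  assumes "p > 0" "q > 0" "max_commutative (int (p * q)) C" "(int p, 0) \<in> C" "(0, int q) \<in> C"
  shows "C \<subseteq> pq_set p q"
proof
  fix z assume "z \<in> C"
  then have "commutes (int (p * q)) z (int p, 0)" "commutes (int (p * q)) z (0, int q)" "z \<in> Zd2 (int (p * q))"
    using assms(3-5) unfolding max_commutative_def by blast+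
  then show "z \<in> pq_set p q"
    using assms(1,2) by (simp add: pq_set_def commutes_left_generator_iff commutes_right_generator_iff)
qed

lemma not_unit_mod_if_common_divisor:
  fixes a D s :: int
  assumes "a dvd D" "a dvd s" "\<not> is_unit a"
  shows "\<not> unit_mod D s"
  using assms coprime_common_divisor unfolding unit_mod_def by blast

lemma diff_set_collision:
  assumes "i < length S" "j < length S" "i \<noteq> j" "a dvd d" "b dvd d"
    "a dvd fst (S!i) - fst (S!j)" "b dvd snd (S!i) - snd (S!j)"
  shows "\<exists>(m, n) \<in> diff_set d S. a dvd m \<and> b dvd n"
proof -
  have ordered: "\<exists>(m, n) \<in> diff_set d S. a dvd m \<and> b dvd n"
    if "i' < j'" "j' < length S" "a dvd fst (S!j') - fst (S!i')" "b dvd snd (S!j') - snd (S!i')" for i' j'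
  proof -
    have "((fst (S!j') - fst (S!i')) mod d, (snd (S!j') - snd (S!i')) mod d) \<in> diff_set d S"
      unfolding diff_set_def using that(1,2) by blast
    moreover have "a dvd (fst (S!j') - fst (S!i')) mod d" "b dvd (snd (S!j') - snd (S!i')) mod d"
      using that(3,4) assms(4,5) by (simp_all add: dvd_mod_iff)
    ultimately show ?thesis by blast
  qed
  moreover have "a dvd fst (S!j) - fst (S!i)" "b dvd snd (S!j) - snd (S!i)"
    using assms(6,7) by (simp_all add: dvd_diff_commute)
  moreover consider "i < j" | "j < i" using assms(3) by linarith
  ultimately show ?thesis using ordered assms(1,2,6,7) by metis
qed

lemma not_unit_mod_if_dvd_factors:
  assumes "p \<ge> 2" "q \<ge> 2" "int p dvd s" "int q dvd t"
  shows "\<not> unit_mod (int (p * q)) s" "\<not> unit_mod (int (p * q)) t"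
proof -
  have "\<not> is_unit (int p)" "\<not> is_unit (int q)" using assms(1,2) by auto
  then show "\<not> unit_mod (int (p * q)) s" "\<not> unit_mod (int (p * q)) t"
    using assms(3,4) not_unit_mod_if_common_divisor[of "int p" "int (p * q)" s]
      not_unit_mod_if_common_divisor[of "int q" "int (p * q)" t] by auto
qed

lemma unit_pair_not_in_max_commutative:
  assumes "p \<ge> 2" "q \<ge> 2"
    and C: "max_commutative (int (p * q)) C" "(int p, 0) \<in> C" "(0, int q) \<in> C"
    and "unit_mod (int (p * q)) s \<or> unit_mod (int (p * q)) t"
  shows "(s, t) \<notin> C"
proof
  assume "(s, t) \<in> C"
  then have "int p dvd s" "int q dvd t"
    using max_commutative_subset_pq_set[OF _ _ C] assms(1,2) by (auto simp: pq_set_def)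
  then show False using not_unit_mod_if_dvd_factors[OF assms(1,2)] assms(6) by blast
qed

lemma one_way_LOCC_distinguishable_if_unit_differences:
  assumes "p \<ge> 2" "q \<ge> 2"
    and units: "\<forall>(m, n) \<in> diff_set (int (p * q)) S. unit_mod (int (p * q)) m \<or> unit_mod (int (p * q)) n"
  shows "one_way_LOCC_distinguishable (p * q) S"
proof (rule one_way_LOCC_distinguishable_if_no_collision, rule_tac [3] notI)
  show "p > 0" "q > 0" using assms(1,2) by auto
  fix i j assume ij: "i < length S" "j < length S" "i \<noteq> j"
    and collision: "int p dvd fst (S!i) - fst (S!j) \<and> int q dvd snd (S!i) - snd (S!j)"
  have "\<exists>(m, n) \<in> diff_set (int (p * q)) S. int p dvd m \<and> int q dvd n"
    using collision by (intro diff_set_collision[OF ij]) simp_all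
  then obtain m n where mn: "(m, n) \<in> diff_set (int (p * q)) S" "int p dvd m" "int q dvd n"
    by blast
  then have "unit_mod (int (p * q)) m \<or> unit_mod (int (p * q)) n" using units by blast
  then show False using not_unit_mod_if_dvd_factors[OF assms(1,2) mn(2,3)] by blast
qed

theorem mainTheorem8:
  fixes p q :: nat
  assumes "p \<ge> 2" and "q \<ge> 2"
  shows "(\<exists>C. max_commutative (int (p*q)) C \<and> (int p, 0) \<in> C \<and> (0, int q) \<in> C)
    \<and> (\<forall>C. max_commutative (int (p*q)) C \<and> (int p, 0) \<in> C \<and> (0, int q) \<in> C \<longrightarrow>
         (\<forall>s t. (s, t) \<in> Zd2 (int (p*q)) \<and> (unit_mod (int (p*q)) s \<or> unit_mod (int (p*q)) t)
                  \<longrightarrow> (s, t) \<notin> C)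
       \<and> (\<forall>S :: (int \<times> int) list. distinct S \<and> set S \<subseteq> Zd2 (int (p*q))
            \<and> (\<forall>(m, n) \<in> diff_set (int (p*q)) S. unit_mod (int (p*q)) m \<or> unit_mod (int (p*q)) n)
            \<longrightarrow> diff_set (int (p*q)) S \<inter> C = {} \<and> one_way_LOCC_distinguishable (p*q) S))"
proof -
  show ?thesis
  proof (intro conjI allI impI; (elim conjE)?)
    show "\<exists>C. max_commutative (int (p * q)) C \<and> (int p, 0) \<in> C \<and> (0, int q) \<in> C"
      using max_commutative_pq_set[OF assms] generators_in_pq_set[OF assms] by blast
  next
    fix C s t
    assume C: "max_commutative (int (p * q)) C" "(int p, 0) \<in> C" "(0, int q) \<in> C"
      and "unit_mod (int (p * q)) s \<or> unit_mod (int (p * q)) t"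
    then show "(s, t) \<notin> C" by (rule unit_pair_not_in_max_commutative[OF assms])
  next
    fix C S
    assume C: "max_commutative (int (p * q)) C" "(int p, 0) \<in> C" "(0, int q) \<in> C"
      and units: "\<forall>(m, n) \<in> diff_set (int (p * q)) S. unit_mod (int (p * q)) m \<or> unit_mod (int (p * q)) n"
    have "(m, n) \<notin> C" if "(m, n) \<in> diff_set (int (p * q)) S" for m n
      using that units unit_pair_not_in_max_commutative[OF assms C] by blast
    then show "diff_set (int (p * q)) S \<inter> C = {}" by auto
    show "one_way_LOCC_distinguishable (p * q) S"
      using one_way_LOCC_distinguishable_if_unit_differences[OF assms units] .
  qed
qed

end
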